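(* Let $f:\mathbb{R}^{2}\to\mathbb{R}$ be smooth and either quasi normal or quasi split normal, and for $k_{1}\neq0$, $k_{2}\neq0$, $x,y\in\mathbb{R}$ let $F(k_{1},y)=\lim_{r\to\infty}\int_{-r}^{r}f(x,y)e^{-ik_{1}x}\,dx$ and $G(x,k_{2})=\lim_{r\to\infty}\int_{-r}^{r}f(x,y)e^{-ik_{2}y}\,dy$. Then for $k_{1}\neq0$, $k_{2}\neq0$ the integrals $F(k_{1},k_{2})=\int_{-\infty}^{\infty}F(k_{1},y)e^{-ik_{2}y}\,dy$ and $G(k_{1},k_{2})=\int_{-\infty}^{\infty}G(x,k_{2})e^{-ik_{1}x}\,dx$ are well defined, and $F(k_{1},k_{2})=G(k_{1},k_{2})=\lim_{m\to\infty,n\to\infty}\int_{-m}^{m}\int_{-n}^{n}f(x,y)e^{-ik_{1}x}e^{-ik_{2}y}\,dx\,dy.$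
   Context: One-variable notions: a smooth $g:\mathbb{R}\setminus V\to\mathbb{R}$, $V\subset\mathbb{R}$ bounded closed, is analytic at infinity if there exist $\epsilon_{1},\epsilon_{2}>0$ such that $g(1/t)=\sum_{n\geq1}a_{n}t^{n}$ for $0<t<\epsilon_{1}$ and $g(1/t)=\sum_{n\geq1}b_{n}t^{n}$ for $-\epsilon_{2}<t<0$, with real coefficients and both power series absolutely convergent on the respective intervals. Two-variable notions: for smooth $f:\mathbb{R}^{2}\to\mathbb{R}$, $f$ is of very moderate decrease if there is $C>0$ with $|f(x,y)|\leq\frac{C}{|(x,y)|}$ for $|(x,y)|>1$, and of moderate decrease if $|f(x,y)|\leq\frac{C}{|(x,y)|^{2}}$ for $|(x,y)|>1$. For fixed $x$ write $f_{x}(y)=f(x,y)$ and for fixed $y$ write $f_{y}(x)=f(x,y)$. Conditions: (i) for every $x$, $f_{x}$ is analytic at infinity; (ii) for every $y$, $f_{y}$ is analytic at infinity; (iii) $f$ is of very moderate decrease; (iv) $\frac{\partial f}{\partial x}$ and $\frac{\partial f}{\partial y}$ are of moderate decrease. $f$ is quasi normal if (i)–(iv) hold and (v)': for sufficiently large $x$, the zeros of $f_{x}$ are contained in a union $(-M_{x},-N_{x})\cup(N_{x},M_{x})$ of bounded intervals with $M_{x}-N_{x}$ uniformly bounded in $x$, and similarly for $(f_{x})'$, $(f_{x})''$ (each with its own such intervals), and for $f_{y},(f_{y})',(f_{y})''$ with sufficiently large $y$. $f$ is quasi split normal if (i)–(iv) hold and (v)'': for sufficiently large $(x,y)$, $f=f_{1}+f_{2}$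 with $f_{1},f_{2}$ quasi normal and $f,f_{1},f_{2}$ smooth. *)

theory Defs
  imports "HOL-Analysis.Analysis"
begin

definition partial_x :: "(real \<times> real \<Rightarrow> real) \<Rightarrow> real \<times> real \<Rightarrow> real" where
  "partial_x f = (\<lambda>(x, y). deriv (\<lambda>t. f (t, y)) x)"

definition partial_y :: "(real \<times> real \<Rightarrow> real) \<Rightarrow> real \<times> real \<Rightarrow> real" where
  "partial_y f = (\<lambda>(x, y). deriv (\<lambda>t. f (x, t)) y)"

text \<open>Smooth (C-infinity) functions on R^2: differentiable everywhere, with
  smooth partial derivatives (coinductively, so all partial derivatives of all
  orders exist and are continuous).\<close>
coinductive smooth2 :: "(real \<times> real \<Rightarrow> real) \<Rightarrow> bool" where
  "\<lbrakk> \<forall>z. f differentiable (at z); smooth2 (partial_x f); smooth2 (partial_y f) \<rbrakk>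
     \<Longrightarrow> smooth2 f"

definition analytic_at_infinity :: "(real \<Rightarrow> real) \<Rightarrow> bool" where
  "analytic_at_infinity g \<longleftrightarrow>
     (\<exists>e1>0. \<exists>e2>0. \<exists>a b :: nat \<Rightarrow> real.
        (\<forall>t. 0 < t \<and> t < e1 \<longrightarrow>
            summable (\<lambda>n. \<bar>a n * t ^ Suc n\<bar>) \<and> g (1 / t) = (\<Sum>n. a n * t ^ Suc n)) \<and>
        (\<forall>t. - e2 < t \<and> t < 0 \<longrightarrow>
            summable (\<lambda>n. \<bar>b n * t ^ Suc n\<bar>) \<and> g (1 / t) = (\<Sum>n. b n * t ^ Suc n)))"

definition very_moderate_decrease :: "(real \<times> real \<Rightarrow> real) \<Rightarrow> bool" where
  "very_moderate_decrease f \<longleftrightarrow>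
     (\<exists>C>0. \<forall>z. norm z > 1 \<longrightarrow> \<bar>f z\<bar> \<le> C / norm z)"

definition moderate_decrease :: "(real \<times> real \<Rightarrow> real) \<Rightarrow> bool" where
  "moderate_decrease f \<longleftrightarrow>
     (\<exists>C>0. \<forall>z. norm z > 1 \<longrightarrow> \<bar>f z\<bar> \<le> C / (norm z)\<^sup>2)"

definition basic_conditions :: "(real \<times> real \<Rightarrow> real) \<Rightarrow> bool" where
  "basic_conditions f \<longleftrightarrow>
     (\<forall>x. analytic_at_infinity (\<lambda>y. f (x, y))) \<and>
     (\<forall>y. analytic_at_infinity (\<lambda>x. f (x, y))) \<and>
     very_moderate_decrease f \<and>
     moderate_decrease (partial_x f) \<and> moderate_decrease (partial_y f)"

definition zeros_in_bands :: "real \<Rightarrow> (real \<Rightarrow> real) \<Rightarrow> bool" where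
  "zeros_in_bands B g \<longleftrightarrow>
     (\<exists>N M. 0 \<le> N \<and> N \<le> M \<and> M - N \<le> B \<and>
        {t. g t = 0} \<subseteq> {-M<..<-N} \<union> {N<..<M})"

definition condition_v' :: "(real \<times> real \<Rightarrow> real) \<Rightarrow> bool" where
  "condition_v' f \<longleftrightarrow>
     (\<exists>R B. \<forall>s. \<bar>s\<bar> \<ge> R \<longrightarrow>
        zeros_in_bands B (\<lambda>y. f (s, y)) \<and>
        zeros_in_bands B (deriv (\<lambda>y. f (s, y))) \<and>
        zeros_in_bands B (deriv (deriv (\<lambda>y. f (s, y)))) \<and>
        zeros_in_bands B (\<lambda>x. f (x, s)) \<and>
        zeros_in_bands B (deriv (\<lambda>x. f (x, s))) \<and>
        zeros_in_bands B (deriv (deriv (\<lambda>x. f (x, s)))))"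

definition quasi_normal :: "(real \<times> real \<Rightarrow> real) \<Rightarrow> bool" where
  "quasi_normal f \<longleftrightarrow> smooth2 f \<and> basic_conditions f \<and> condition_v' f"

definition quasi_split_normal :: "(real \<times> real \<Rightarrow> real) \<Rightarrow> bool" where
  "quasi_split_normal f \<longleftrightarrow> smooth2 f \<and> basic_conditions f \<and>
     (\<exists>R f1 f2. smooth2 f1 \<and> smooth2 f2 \<and> quasi_normal f1 \<and> quasi_normal f2 \<and>
        (\<forall>z. norm z \<ge> R \<longrightarrow> f z = f1 z + f2 z))"

definition fourier_x :: "(real \<times> real \<Rightarrow> real) \<Rightarrow> real \<Rightarrow> real \<Rightarrow> complex" where
  "fourier_x f k1 y = Lim at_top (\<lambda>r. integral {-r..r} (\<lambda>x. complex_of_real (f (x, y)) * cis (- k1 * x)))"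

definition fourier_y :: "(real \<times> real \<Rightarrow> real) \<Rightarrow> real \<Rightarrow> real \<Rightarrow> complex" where
  "fourier_y f x k2 = Lim at_top (\<lambda>r. integral {-r..r} (\<lambda>y. complex_of_real (f (x, y)) * cis (- k2 * y)))"

definition has_improper_integral_R :: "(real \<Rightarrow> complex) \<Rightarrow> complex \<Rightarrow> bool" where
  "has_improper_integral_R g L \<longleftrightarrow>
     (\<forall>a b. g integrable_on {a..b}) \<and>
     ((\<lambda>p. integral {fst p..snd p} g) \<longlongrightarrow> L) (at_bot \<times>\<^sub>F at_top)"

end

theory Submission
  imports Defs
begin

(*
  Integrating by parts in x bounds the truncated integrals of f(x, y) e^(-i k1 x) by O(1/|y|)
  and their tails outside (-r, r) by O(1/r), uniformly in y, so they converge to F(k1, y) at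
  rate O(1/r), uniformly in y. For a box [a, b] x [u, v] with [u, v] outside (-A, A), integrating
  by parts in y leaves boundary terms of size O(1/A) and the x-integral of the oscillatory
  y-integrals of df/dy. For bounded |x| these are O(1/A) by the decay of df/dy; for large |x|
  they are O(1/(x^2 + A^2)) by condition (v)': the zeros of d^2f/dy^2 lie in two narrow bands,
  off which df/dy is monotone, so one more integration by parts costs only its supremum. Hence
  the box integrals are Cauchy at rate O(1/A) in y and, by the same argument for the transposed
  function, in x. Their limit L is the double limit, and by the uniform convergence above it is
  also the improper integral of F(k1, y) e^(-i k2 y), and symmetrically of G(x, k2) e^(-i k1 x).
  A quasi split normal f agrees with f1 + f2 for large |x|, which is all the band estimate needs.
*)

section \<open>Oscillatory integrals in one variable\<close>

lemma has_vector_derivative_cis_linear: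
  "((\<lambda>t. cis (- k * t)) has_vector_derivative (- \<i> * of_real k * cis (- k * t))) (at t within S)"
proof -
  have "((\<lambda>t. cis (- k * t)) has_derivative (\<lambda>h. (- k * h) *\<^sub>R (\<i> * cis (- k * t)))) (at t within S)"
    by (intro derivative_intros)
  then show ?thesis
    by (simp add: has_vector_derivative_def scaleR_conv_of_real algebra_simps)
qed

lemma integration_by_parts_cis:
  fixes g g' :: "real \<Rightarrow> real"
  assumes k: "k \<noteq> 0" and pq: "p \<le> q"
    and g': "\<And>t. t \<in> {p..q} \<Longrightarrow> (g has_real_derivative g' t) (at t)"
  shows "(\<lambda>t. of_real (g' t) * cis (- k * t)) integrable_on {p..q}"
    and "integral {p..q} (\<lambda>t. of_real (g t) * cis (- k * t)) =
         (\<i> / of_real k) * (of_real (g q) * cis (- k * q) - of_real (g p) * cis (- k * p))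
         - (\<i> / of_real k) * integral {p..q} (\<lambda>t. of_real (g' t) * cis (- k * t))"
proof -
  define P where "P t = (\<i> / of_real k) * (of_real (g t) * cis (- k * t))" for t
  define P' where "P' t = (\<i> / of_real k) * (of_real (g' t) * cis (- k * t)) + of_real (g t) * cis (- k * t)" for t
  have "continuous_on {p..q} g"
    using g' by (meson DERIV_continuous continuous_at_imp_continuous_on)
  then have g_integrable: "(\<lambda>t. of_real (g t) * cis (- k * t)) integrable_on {p..q}"
    by (intro integrable_continuous_interval continuous_intros)
  have "(P has_vector_derivative P' t) (at t within {p..q})" if t: "t \<in> {p..q}" for t
  proof -
    have "((\<lambda>t. of_real (g t)) has_vector_derivative of_real (g' t)) (at t within {p..q})"
      using g'[OF t] by (metis has_field_derivative_imp_has_derivative has_real_derivative_iff_has_vector_derivative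
          has_vector_derivative_at_within has_vector_derivative_of_real)
    from has_vector_derivative_mult[OF this has_vector_derivative_cis_linear]
    have "(P has_vector_derivative (\<i> / of_real k) * (of_real (g t) * (- \<i> * of_real k * cis (- k * t))
            + of_real (g' t) * cis (- k * t))) (at t within {p..q})"
      unfolding P_def by (intro has_vector_derivative_mult_right) simp
    moreover have "(\<i> / of_real k) * (of_real (g t) * (- \<i> * of_real k * cis (- k * t))
            + of_real (g' t) * cis (- k * t)) = P' t"
      using k by (simp add: P'_def field_simps)
    ultimately show ?thesis by simp
  qed
  then have ftc: "(P' has_integral (P q - P p)) {p..q}"
    by (intro fundamental_theorem_of_calculus pq)
  have "(\<lambda>t. P' t - of_real (g t) * cis (- k * t)) integrable_on {p..q}"
    using ftc g_integrable by (intro integrable_diff) auto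
  then have "(\<lambda>t. (\<i> / of_real k) * (of_real (g' t) * cis (- k * t))) integrable_on {p..q}"
    by (simp add: P'_def)
  then show g'_integrable: "(\<lambda>t. of_real (g' t) * cis (- k * t)) integrable_on {p..q}"
    using k by (subst (asm) integrable_on_mult_right_iff) auto
  have "integral {p..q} P' = P q - P p" using ftc by blast
  moreover have "integral {p..q} P' = (\<i> / of_real k) * integral {p..q} (\<lambda>t. of_real (g' t) * cis (- k * t))
     + integral {p..q} (\<lambda>t. of_real (g t) * cis (- k * t))"
    unfolding P'_def using g_integrable g'_integrable
    by (subst integral_add) (auto intro!: integrable_on_divide integrable_on_mult_right)
  ultimately show "integral {p..q} (\<lambda>t. of_real (g t) * cis (- k * t)) =
         (\<i> / of_real k) * (of_real (g q) * cis (- k * q) - of_real (g p) * cis (- k * p))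
         - (\<i> / of_real k) * integral {p..q} (\<lambda>t. of_real (g' t) * cis (- k * t))"
    unfolding P_def by (simp add: algebra_simps)
qed

lemma norm_integral_mult_cis_le:
  fixes g g' b :: "real \<Rightarrow> real"
  assumes k: "k \<noteq> 0" and pq: "p \<le> q"
    and g': "\<And>t. t \<in> {p..q} \<Longrightarrow> (g has_real_derivative g' t) (at t)"
    and b: "b integrable_on {p..q}" "\<And>t. t \<in> {p..q} \<Longrightarrow> \<bar>g' t\<bar> \<le> b t"
  shows "norm (integral {p..q} (\<lambda>t. of_real (g t) * cis (- k * t)))
           \<le> (\<bar>g p\<bar> + \<bar>g q\<bar> + integral {p..q} b) / \<bar>k\<bar>"
proof -
  note parts = integration_by_parts_cis[OF k pq, of g g', OF g']
  let ?boundary = "of_real (g q) * cis (- k * q) - of_real (g p) * cis (- k * p)"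
  let ?rest = "integral {p..q} (\<lambda>t. of_real (g' t) * cis (- k * t))"
  have "norm ?rest \<le> integral {p..q} b"
    using parts(1) b by (intro integral_norm_bound_integral) (auto simp: norm_mult)
  moreover have "norm ?boundary \<le> \<bar>g p\<bar> + \<bar>g q\<bar>"
    using norm_triangle_ineq4[of "of_real (g q) * cis (- k * q)" "of_real (g p) * cis (- k * p)"]
    by (simp add: norm_mult)
  moreover have "integral {p..q} (\<lambda>t. of_real (g t) * cis (- k * t)) = (\<i> / of_real k) * (?boundary - ?rest)"
    using parts(2) by (simp only: right_diff_distrib)
  then have "norm (integral {p..q} (\<lambda>t. of_real (g t) * cis (- k * t))) = norm (?boundary - ?rest) / \<bar>k\<bar>"
    by (simp add: norm_mult norm_divide)
  ultimately show ?thesis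
    using norm_triangle_ineq4[of ?boundary ?rest] by (auto intro!: divide_right_mono)
qed

lemma
  fixes s p q :: real
  assumes s: "s > 0"
  shows integrable_inverse_sum_squares: "(\<lambda>x. 1 / (s\<^sup>2 + x\<^sup>2)) integrable_on {p..q}"
    and integral_inverse_sum_squares_le: "integral {p..q} (\<lambda>x. 1 / (s\<^sup>2 + x\<^sup>2)) \<le> pi / s"
proof -
  have pos: "s\<^sup>2 + x\<^sup>2 > 0" for x using s by (simp add: add_pos_nonneg)
  then show "(\<lambda>x. 1 / (s\<^sup>2 + x\<^sup>2)) integrable_on {p..q}"
    by (intro integrable_continuous_interval continuous_intros) (auto simp: pos[THEN less_imp_neq, symmetric])
  show "integral {p..q} (\<lambda>x. 1 / (s\<^sup>2 + x\<^sup>2)) \<le> pi / s"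
  proof (cases "p \<le> q")
    case True
    have "((\<lambda>x. arctan (x / s) / s) has_real_derivative 1 / (s\<^sup>2 + x\<^sup>2)) (at x)" for x
    proof -
      have "((\<lambda>x. arctan (x / s) / s) has_real_derivative inverse (1 + (x / s)\<^sup>2) * (1 / s) / s) (at x)"
        using s by (intro derivative_eq_intros) auto
      moreover have "s * (s * s) + s * (x * x) > 0"
        using s by (intro add_pos_nonneg) auto
      then have "inverse (1 + (x / s)\<^sup>2) * (1 / s) / s = 1 / (s\<^sup>2 + x\<^sup>2)"
        using s by (simp add: field_simps power2_eq_square)
      ultimately show ?thesis by simp
    qed
    then have "((\<lambda>x. 1 / (s\<^sup>2 + x\<^sup>2)) has_integral (arctan (q / s) / s - arctan (p / s) / s)) {p..q}"
      by (intro fundamental_theorem_of_calculus True)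
         (metis has_real_derivative_iff_has_vector_derivative has_vector_derivative_at_within)
    moreover have "arctan (q / s) / s - arctan (p / s) / s \<le> pi / s"
      using s arctan_bounded[of "q / s"] arctan_bounded[of "p / s"]
      by (simp add: diff_divide_distrib[symmetric] divide_right_mono)
    ultimately show ?thesis by (simp add: integral_unique)
  qed (use s in simp)
qed

lemma
  fixes A u v :: real
  assumes A: "A > 0" and uv: "u \<le> v" and side: "A \<le> u \<or> v \<le> - A"
  shows integrable_inverse_square: "(\<lambda>y. 1 / y\<^sup>2) integrable_on {u..v}"
    and integral_inverse_square_le: "integral {u..v} (\<lambda>y. 1 / y\<^sup>2) \<le> 1 / A"
proof -
  have "((\<lambda>y. - 1 / y) has_real_derivative 1 / y\<^sup>2) (at y)" if "y \<in> {u..v}" for y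
  proof -
    have "y \<noteq> 0" using that side A by auto
    then show ?thesis
      by (auto intro!: derivative_eq_intros simp: power2_eq_square field_simps)
  qed
  then have "((\<lambda>y. 1 / y\<^sup>2) has_integral (- 1 / v - - 1 / u)) {u..v}"
    by (intro fundamental_theorem_of_calculus uv)
       (metis has_real_derivative_iff_has_vector_derivative has_vector_derivative_at_within)
  moreover have "- 1 / v - - 1 / u \<le> 1 / A"
    using side
  proof
    assume "A \<le> u"
    then have "1 / u \<le> 1 / A" "0 < 1 / v" using A uv by (auto simp: frac_le)
    then show ?thesis by linarith
  next
    assume "v \<le> - A"
    then have "- 1 / v \<le> 1 / A" "1 / u < 0" using A uv by (auto simp: field_simps)
    then show ?thesis by linarith
  qed
  ultimately show "(\<lambda>y. 1 / y\<^sup>2) integrable_on {u..v}" "integral {u..v} (\<lambda>y. 1 / y\<^sup>2) \<le> 1 / A"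
    by (auto simp: integral_unique)
qed

lemma continuous_on_nonvanishing_sign:
  fixes g :: "real \<Rightarrow> real"
  assumes "continuous_on {p..q} g" and "\<And>t. t \<in> {p..q} \<Longrightarrow> g t \<noteq> 0"
  shows "(\<forall>t\<in>{p..q}. 0 < g t) \<or> (\<forall>t\<in>{p..q}. g t < 0)"
proof (rule ccontr)
  assume "\<not> ?thesis"
  then obtain a b where ab: "a \<in> {p..q}" "b \<in> {p..q}" "g a \<le> 0" "0 \<le> g b"
    by (meson not_less)
  have "connected (g ` {p..q})"
    using assms(1) by (intro connected_continuous_image) auto
  then have "0 \<in> g ` {p..q}"
    using ab unfolding connected_iff_interval by blast
  then show False
    using assms(2) by auto
qed

lemma norm_integral_mult_cis_le_length:
  fixes g :: "real \<Rightarrow> real"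
  assumes "p \<le> q" and "continuous_on {p..q} g" and "\<And>t. t \<in> {p..q} \<Longrightarrow> \<bar>g t\<bar> \<le> S"
  shows "norm (integral {p..q} (\<lambda>t. of_real (g t) * cis (- k * t))) \<le> (q - p) * S"
proof -
  have "norm (integral {p..q} (\<lambda>t. of_real (g t) * cis (- k * t))) \<le> integral {p..q} (\<lambda>t. S)"
    using assms by (intro integral_norm_bound_integral integrable_continuous_interval continuous_intros)
      (auto simp: norm_mult)
  with assms(1) show ?thesis by simp
qed

lemma norm_integral_mult_cis_le_derivative_nonzero:
  fixes g g' :: "real \<Rightarrow> real"
  assumes k: "k \<noteq> 0" and pq: "p \<le> q"
    and g': "\<And>t. t \<in> {p..q} \<Longrightarrow> (g has_real_derivative g' t) (at t)"
    and g'_continuous: "continuous_on {p..q} g'"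
    and g'_nonzero: "\<And>t. t \<in> {p..q} \<Longrightarrow> g' t \<noteq> 0"
    and S: "\<And>t. t \<in> {p..q} \<Longrightarrow> \<bar>g t\<bar> \<le> S"
  shows "norm (integral {p..q} (\<lambda>t. of_real (g t) * cis (- k * t))) \<le> 4 * S / \<bar>k\<bar>"
proof -
  have ftc: "(g' has_integral (g q - g p)) {p..q}"
    using g' by (intro fundamental_theorem_of_calculus pq)
      (metis has_real_derivative_iff_has_vector_derivative has_vector_derivative_at_within)
  have abs_g': "((\<lambda>t. \<bar>g' t\<bar>) has_integral \<bar>g q - g p\<bar>) {p..q}"
    using continuous_on_nonvanishing_sign[OF g'_continuous g'_nonzero]
  proof
    assume pos: "\<forall>t\<in>{p..q}. 0 < g' t"
    then have "0 \<le> g q - g p"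
      using ftc by (metis has_integral_nonneg less_eq_real_def)
    with ftc pos show ?thesis
      by (subst has_integral_cong[of "{p..q}" _ g']) (auto simp: abs_of_pos)
  next
    assume neg: "\<forall>t\<in>{p..q}. g' t < 0"
    have ftc': "((\<lambda>t. - g' t) has_integral - (g q - g p)) {p..q}"
      using ftc by (rule has_integral_neg)
    then have "0 \<le> - (g q - g p)"
      using neg by (metis has_integral_nonneg less_eq_real_def neg_0_less_iff_less)
    with ftc' neg show ?thesis
      by (subst has_integral_cong[of "{p..q}" _ "\<lambda>t. - g' t"]) (auto simp: abs_of_neg)
  qed
  have "norm (integral {p..q} (\<lambda>t. of_real (g t) * cis (- k * t)))
          \<le> (\<bar>g p\<bar> + \<bar>g q\<bar> + integral {p..q} (\<lambda>t. \<bar>g' t\<bar>)) / \<bar>k\<bar>"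
    by (rule norm_integral_mult_cis_le[OF k pq]) (use abs_g' g' in auto)
  also have "\<dots> \<le> 4 * S / \<bar>k\<bar>"
    using S[of p] S[of q] pq abs_g' by (intro divide_right_mono) (auto simp: integral_unique)
  finally show ?thesis .
qed

lemma norm_integral_mult_cis_le_short_or_monotone:
  fixes g g' :: "real \<Rightarrow> real"
  assumes k: "k \<noteq> 0" and pq: "p \<le> q" and B: "0 \<le> B"
    and g': "\<And>t. t \<in> {p..q} \<Longrightarrow> (g has_real_derivative g' t) (at t)"
    and g'_continuous: "continuous_on {p..q} g'"
    and S: "\<And>t. t \<in> {p..q} \<Longrightarrow> \<bar>g t\<bar> \<le> S"
    and short_or_monotone: "q - p \<le> B \<or> (\<forall>t\<in>{p..q}. g' t \<noteq> 0)"
  shows "norm (integral {p..q} (\<lambda>t. of_real (g t) * cis (- k * t))) \<le> (4 / \<bar>k\<bar> + B) * S"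
proof -
  have S_nonneg: "0 \<le> S"
    using S[of p] pq by auto
  from short_or_monotone show ?thesis
  proof
    assume short: "q - p \<le> B"
    have "continuous_on {p..q} g"
      using g' by (meson DERIV_continuous continuous_at_imp_continuous_on)
    then have "norm (integral {p..q} (\<lambda>t. of_real (g t) * cis (- k * t))) \<le> (q - p) * S"
      by (intro norm_integral_mult_cis_le_length pq S)
    also have "\<dots> \<le> (4 / \<bar>k\<bar> + B) * S"
      using short S_nonneg by (intro mult_right_mono add_increasing) auto
    finally show ?thesis .
  next
    assume "\<forall>t\<in>{p..q}. g' t \<noteq> 0"
    then have "norm (integral {p..q} (\<lambda>t. of_real (g t) * cis (- k * t))) \<le> 4 * S / \<bar>k\<bar>"
      by (intro norm_integral_mult_cis_le_derivative_nonzero[OF k pq g' g'_continuous _ S]) auto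
    also have "\<dots> \<le> (4 / \<bar>k\<bar> + B) * S"
      using S_nonneg B by (simp add: distrib_right)
    finally show ?thesis .
  qed
qed

(* The zeros of g' lie in two bands of width at most B, which cut [u, v] into five pieces;
   each piece is either shorter than B or free of zeros of g', so that g is monotone on it. *)
lemma norm_integral_mult_cis_le_zeros_in_bands:
  fixes g g' :: "real \<Rightarrow> real"
  assumes k: "k \<noteq> 0" and uv: "u \<le> v"
    and g': "\<And>t. (g has_real_derivative g' t) (at t)"
    and g'_continuous: "continuous_on UNIV g'"
    and S: "\<And>t. t \<in> {u..v} \<Longrightarrow> \<bar>g t\<bar> \<le> S"
    and bands: "zeros_in_bands B g'"
  shows "norm (integral {u..v} (\<lambda>t. of_real (g t) * cis (- k * t))) \<le> 5 * ((4 / \<bar>k\<bar> + B) * S)"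
proof -
  obtain N M where NM: "0 \<le> N" "N \<le> M" "M - N \<le> B" "{t. g' t = 0} \<subseteq> {-M<..<-N} \<union> {N<..<M}"
    using bands unfolding zeros_in_bands_def by blast
  define cl where "cl t = max u (min v t)" for t
  define I where "I a b = integral {cl a..cl b} (\<lambda>t. of_real (g t) * cis (- k * t))" for a b
  have piece: "norm (I a b) \<le> (4 / \<bar>k\<bar> + B) * S"
    if ab: "a \<le> b" and short_or_monotone: "b - a \<le> B \<or> (\<forall>t\<in>{a..b}. g' t \<noteq> 0)" for a b
  proof -
    have cl: "u \<le> cl a" "cl a \<le> cl b" "cl b \<le> v" "cl b - cl a \<le> b - a"
      using ab uv unfolding cl_def by linarith+
    have short_or_monotone': "cl b - cl a \<le> B \<or> (\<forall>t\<in>{cl a..cl b}. g' t \<noteq> 0)"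
    proof (cases "cl a = cl b")
      case True
      then show ?thesis using NM by simp
    next
      case False
      then have "a \<le> cl a" "cl b \<le> b"
        using ab uv unfolding cl_def by linarith+
      then show ?thesis
        using short_or_monotone cl(4) by auto
    qed
    have "0 \<le> B"
      using NM by simp
    then show ?thesis
      unfolding I_def
      by (rule norm_integral_mult_cis_le_short_or_monotone[OF k cl(2)])
        (use short_or_monotone' cl S g' continuous_on_subset[OF g'_continuous subset_UNIV] in auto)
  qed
  have g_continuous: "continuous_on UNIV g"
    using g' by (meson DERIV_continuous continuous_at_imp_continuous_on)
  have I_combine: "I a c = I a b + I b c" if "a \<le> b" "b \<le> c" for a b c
    unfolding I_def using that uv
    by (intro Henstock_Kurzweil_Integration.integral_combine[symmetric] integrable_continuous_interval
        continuous_intros continuous_on_subset[OF g_continuous]) (auto simp: cl_def)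
  have nonzero: "g' t \<noteq> 0" if "t \<le> -M \<or> (-N \<le> t \<and> t \<le> N) \<or> M \<le> t" for t
  proof
    assume "g' t = 0"
    then have "t \<in> {-M<..<-N} \<union> {N<..<M}" using NM(4) by blast
    then show False using that NM(1,2) by auto
  qed
  let ?a = "min u (-M)" and ?b = "max v M"
  have "I ?a ?b = I ?a (-M) + (I (-M) (-N) + (I (-N) N + (I N M + I M ?b)))"
    using NM I_combine[of ?a "-M" ?b] I_combine[of "-M" "-N" ?b] I_combine[of "-N" N ?b]
      I_combine[of N M ?b] by simp
  moreover have "I ?a ?b = integral {u..v} (\<lambda>t. of_real (g t) * cis (- k * t))"
    using uv by (simp add: I_def cl_def)
  moreover have "norm (I ?a (-M) + (I (-M) (-N) + (I (-N) N + (I N M + I M ?b))))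
      \<le> (4 / \<bar>k\<bar> + B) * S + ((4 / \<bar>k\<bar> + B) * S + ((4 / \<bar>k\<bar> + B) * S
         + ((4 / \<bar>k\<bar> + B) * S + (4 / \<bar>k\<bar> + B) * S)))"
    using NM nonzero by (intro norm_triangle_mono piece) auto
  ultimately show ?thesis
    by (simp add: mult.commute)
qed

section \<open>Convergence at a rate\<close>

lemma eventually_rate_less:
  assumes "0 < e"
  shows "eventually (\<lambda>r::real. 0 < r \<and> M / r < e) at_top"
proof -
  have "((\<lambda>r::real. M / r) \<longlongrightarrow> 0) at_top"
    by (intro tendsto_divide_0[OF tendsto_const] filterlim_at_top_imp_at_infinity filterlim_ident)
  then have "eventually (\<lambda>r::real. M / r < e) at_top"
    using assms by (rule order_tendstoD)
  then show ?thesis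
    using eventually_gt_at_top[of 0] by eventually_elim simp
qed

lemma tendsto_at_top_of_rate:
  assumes "\<And>r. 0 < r \<Longrightarrow> dist (g r) L \<le> M / r"
  shows "(g \<longlongrightarrow> L) at_top"
proof (rule tendstoI)
  fix e :: real assume "0 < e"
  from eventually_rate_less[OF this, of M]
  show "eventually (\<lambda>r. dist (g r) L < e) at_top"
    by eventually_elim (use assms in \<open>auto intro: le_less_trans\<close>)
qed

lemma uniform_limit_at_top_of_rate:
  assumes "\<And>r y. 0 < r \<Longrightarrow> y \<in> S \<Longrightarrow> dist (g r y) (G y) \<le> M / r"
  shows "uniform_limit S g G at_top"
  unfolding uniform_limit_iff
proof (intro allI impI)
  fix e :: real assume "0 < e"
  from eventually_rate_less[OF this, of M]
  show "eventually (\<lambda>r. \<forall>y\<in>S. dist (g r y) (G y) < e) at_top"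
    by eventually_elim (use assms in \<open>auto intro: le_less_trans\<close>)
qed

lemma tendsto_prod_filter_of_rate:
  assumes "\<And>A. eventually (P A) F" and "\<And>A. eventually (Q A) G"
    and "\<And>A a b. 0 < A \<Longrightarrow> P A a \<Longrightarrow> Q A b \<Longrightarrow> dist (g (a, b)) L \<le> M / A"
  shows "(g \<longlongrightarrow> L) (F \<times>\<^sub>F G)"
proof (rule tendstoI)
  fix e :: real assume "0 < e"
  then obtain A where A: "0 < A" "M / A < e"
    using eventually_rate_less[of e M] by (auto simp: eventually_at_top_linorder)
  show "eventually (\<lambda>p. dist (g p) L < e) (F \<times>\<^sub>F G)"
    unfolding eventually_prod_filter
    using assms(1,2)[of A] assms(3)[OF A(1)] A(2) by (blast intro: le_less_trans)
qed

lemma limit_of_Cauchy_rate: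
  fixes g :: "real \<Rightarrow> 'a::banach"
  assumes Cauchy: "\<And>r r'. 0 < r \<Longrightarrow> r \<le> r' \<Longrightarrow> dist (g r') (g r) \<le> M / r"
  shows "\<exists>L. \<forall>r>0. dist (g r) L \<le> M / r"
proof -
  define s where "s n = g (real (Suc n))" for n
  have "Cauchy s"
  proof (rule metric_CauchyI)
    fix e :: real assume "0 < e"
    then obtain N :: nat where N: "2 * M / e < real N"
      using reals_Archimedean2 by blast
    have "dist (s m) (s n) < e" if "N \<le> m" "N \<le> n" for m n
    proof -
      have "dist (s m) (s n) \<le> dist (s m) (s N) + dist (s n) (s N)"
        by (rule dist_triangle2)
      also have "\<dots> \<le> 2 * M / real (Suc N)"
        using Cauchy[of "real (Suc N)" "real (Suc m)"] Cauchy[of "real (Suc N)" "real (Suc n)"] that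
        unfolding s_def by simp
      also have "\<dots> < e"
        using N \<open>0 < e\<close> by (simp add: field_simps)
      finally show ?thesis .
    qed
    then show "\<exists>N. \<forall>m\<ge>N. \<forall>n\<ge>N. dist (s m) (s n) < e"
      by blast
  qed
  then obtain L where L: "s \<longlonglongrightarrow> L"
    using Cauchy_convergent_iff convergent_def by blast
  have "dist (g r) L \<le> M / r" if r: "0 < r" for r
  proof (rule tendsto_upperbound)
    show "((\<lambda>n. dist (g r) (s n)) \<longlongrightarrow> dist (g r) L) sequentially"
      by (intro tendsto_intros L)
    obtain N :: nat where "r < real N"
      using reals_Archimedean2 by blast
    have "\<forall>n\<ge>N. dist (g r) (s n) \<le> M / r"
    proof (intro allI impI)
      fix n assume "N \<le> n"
      then have "r \<le> real (Suc n)"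
        using \<open>r < real N\<close> by simp
      then show "dist (g r) (s n) \<le> M / r"
        using Cauchy[OF r] unfolding s_def by (metis dist_commute)
    qed
    then show "eventually (\<lambda>n. dist (g r) (s n) \<le> M / r) sequentially"
      unfolding eventually_sequentially by blast
  qed simp
  then show ?thesis
    by blast
qed

section \<open>Iterated Fourier integrals of decaying functions\<close>

lemma continuous_on_curry_fst:
  assumes "continuous_on UNIV (\<lambda>z. F (fst z) (snd z))"
  shows "continuous_on S (\<lambda>x. F x y)"
  using continuous_on_compose2[OF assms continuous_on_Pair[OF continuous_on_id continuous_on_const]]
  by (simp add: continuous_on_subset)

lemma continuous_on_curry_snd:
  assumes "continuous_on UNIV (\<lambda>z. F (fst z) (snd z))"
  shows "continuous_on S (\<lambda>y. F x y)"
  using continuous_on_compose2[OF assms continuous_on_Pair[OF continuous_on_const continuous_on_id]]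
  by (simp add: continuous_on_subset)

lemma continuous_on_curry_swap:
  assumes "continuous_on UNIV (\<lambda>z. F (fst z) (snd z))"
  shows "continuous_on S (\<lambda>z. F (snd z) (fst z))"
  using continuous_on_compose2[OF assms continuous_on_swap]
  by (simp add: continuous_on_subset prod.swap_def)

lemma continuous_on_parametric_integral:
  fixes F :: "real \<Rightarrow> real \<Rightarrow> complex"
  assumes "continuous_on UNIV (\<lambda>z. F (fst z) (snd z))"
  shows "continuous_on S (\<lambda>x. integral {c..d} (F x))"
proof -
  have "continuous_on (S \<times> cbox c d) (\<lambda>(x, t). F x t)"
    using continuous_on_subset[OF assms subset_UNIV] by (simp add: split_def)
  then show ?thesis
    using integral_continuous_on_param[of S c d F] by (simp add: cbox_interval)
qed

(* The form in which condition (v)' enters the argument. *)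
definition oscillatory_tail_bound :: "(real \<Rightarrow> real \<Rightarrow> real) \<Rightarrow> real \<Rightarrow> real \<Rightarrow> real \<Rightarrow> bool" where
  "oscillatory_tail_bound g k R K \<longleftrightarrow>
     (\<forall>x u v A. R \<le> \<bar>x\<bar> \<longrightarrow> 0 < A \<longrightarrow> u \<le> v \<longrightarrow> (\<forall>y\<in>{u..v}. A \<le> \<bar>y\<bar>) \<longrightarrow>
        norm (integral {u..v} (\<lambda>y. of_real (g x y) * cis (- k * y))) \<le> K / (1 + x\<^sup>2 + A\<^sup>2))"

locale oscillatory_decay =
  fixes h hx hy :: "real \<Rightarrow> real \<Rightarrow> real" and k1 k2 C R K :: real
  assumes k1: "k1 \<noteq> 0" and k2: "k2 \<noteq> 0"
    and continuous_h: "continuous_on UNIV (\<lambda>z. h (fst z) (snd z))"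
    and continuous_hy: "continuous_on UNIV (\<lambda>z. hy (fst z) (snd z))"
    and h_deriv_x: "\<And>x y. ((\<lambda>t. h t y) has_real_derivative hx x y) (at x)"
    and h_deriv_y: "\<And>x y. ((\<lambda>t. h x t) has_real_derivative hy x y) (at y)"
    and h_decay_x: "\<And>x y. \<bar>h x y\<bar> \<le> C / (1 + \<bar>x\<bar>)"
    and h_decay_y: "\<And>x y. \<bar>h x y\<bar> \<le> C / (1 + \<bar>y\<bar>)"
    and hx_decay: "\<And>x y. \<bar>hx x y\<bar> \<le> C / (1 + x\<^sup>2 + y\<^sup>2)"
    and hy_decay: "\<And>x y. \<bar>hy x y\<bar> \<le> C / (1 + x\<^sup>2 + y\<^sup>2)"
    and hy_oscillatory: "oscillatory_tail_bound hy k2 R K"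
begin

lemma C_nonneg: "0 \<le> C"
  using h_decay_x[of 0 0] by simp

lemma hy_oscillatory_bound:
  "R \<le> \<bar>x\<bar> \<Longrightarrow> 0 < A \<Longrightarrow> u \<le> v \<Longrightarrow> \<forall>y\<in>{u..v}. A \<le> \<bar>y\<bar> \<Longrightarrow>
    norm (integral {u..v} (\<lambda>y. of_real (hy x y) * cis (- k2 * y))) \<le> K / (1 + x\<^sup>2 + A\<^sup>2)"
  using hy_oscillatory unfolding oscillatory_tail_bound_def by blast

lemma K_nonneg: "0 \<le> K"
proof -
  have "0 \<le> K / (1 + \<bar>R\<bar>\<^sup>2 + 1)"
    using hy_oscillatory_bound[of "\<bar>R\<bar>" 1 1 1] by simp
  moreover have "0 < 1 + \<bar>R\<bar>\<^sup>2 + 1"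
    by (simp add: add_pos_nonneg)
  ultimately show ?thesis
    by (simp add: zero_le_divide_iff)
qed

lemma continuous_on_integrand:
  "continuous_on S (\<lambda>z. of_real (h (fst z) (snd z)) * cis (- k1 * fst z) * cis (- k2 * snd z))"
  by (intro continuous_intros continuous_on_subset[OF continuous_h]) auto

definition box_integral :: "real \<Rightarrow> real \<Rightarrow> real \<Rightarrow> real \<Rightarrow> complex" where
  "box_integral a b c d =
     integral {a..b} (\<lambda>x. integral {c..d} (\<lambda>y. of_real (h x y) * cis (- k1 * x) * cis (- k2 * y)))"

definition partial_fourier :: "real \<Rightarrow> complex" where
  "partial_fourier y = Lim at_top (\<lambda>r. integral {-r..r} (\<lambda>x. of_real (h x y) * cis (- k1 * x)))"

lemma integrable_h_x:
  "(\<lambda>x. of_real (h x y) * cis (- k1 * x)) integrable_on {a..b}"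
  by (intro integrable_continuous_interval continuous_intros continuous_on_curry_fst[OF continuous_h])

lemma norm_integral_x_le:
  assumes y: "y \<noteq> 0" and ab: "a \<le> b"
  shows "norm (integral {a..b} (\<lambda>x. of_real (h x y) * cis (- k1 * x))) \<le> (2 + pi) * C / (\<bar>k1\<bar> * \<bar>y\<bar>)"
proof -
  have y_pos: "0 < \<bar>y\<bar>" using y by simp
  have h_le: "\<bar>h x y\<bar> \<le> C / \<bar>y\<bar>" for x
    using h_decay_y[of x y] C_nonneg y_pos
    by (smt (verit, best) divide_left_mono mult_pos_pos)
  have hx_le: "\<bar>hx x y\<bar> \<le> C * (1 / (\<bar>y\<bar>\<^sup>2 + x\<^sup>2))" for x
  proof -
    have "\<bar>hx x y\<bar> \<le> C / (1 + x\<^sup>2 + y\<^sup>2)" by (rule hx_decay)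
    also have "\<dots> \<le> C / (\<bar>y\<bar>\<^sup>2 + x\<^sup>2)"
      using C_nonneg y_pos by (intro divide_left_mono) (auto simp: add_pos_nonneg)
    finally show ?thesis by simp
  qed
  have "norm (integral {a..b} (\<lambda>x. of_real (h x y) * cis (- k1 * x)))
      \<le> (\<bar>h a y\<bar> + \<bar>h b y\<bar> + integral {a..b} (\<lambda>x. C * (1 / (\<bar>y\<bar>\<^sup>2 + x\<^sup>2)))) / \<bar>k1\<bar>"
    using h_deriv_x hx_le y_pos
    by (intro norm_integral_mult_cis_le k1 ab integrable_on_mult_right integrable_inverse_sum_squares)
  also have "\<dots> = (\<bar>h a y\<bar> + \<bar>h b y\<bar> + C * integral {a..b} (\<lambda>x. 1 / (\<bar>y\<bar>\<^sup>2 + x\<^sup>2))) / \<bar>k1\<bar>"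
    by (simp only: integral_mult_right)
  also have "\<dots> \<le> (C / \<bar>y\<bar> + C / \<bar>y\<bar> + C * (pi / \<bar>y\<bar>)) / \<bar>k1\<bar>"
    using h_le[of a] h_le[of b] integral_inverse_sum_squares_le[OF y_pos, of a b] C_nonneg
    by (intro divide_right_mono add_mono mult_left_mono) auto
  also have "\<dots> = (2 + pi) * C / (\<bar>k1\<bar> * \<bar>y\<bar>)"
    using y k1 by (simp add: field_simps)
  finally show ?thesis .
qed

lemma norm_integral_x_tail_le:
  assumes A: "0 < A" and uv: "u \<le> v" and side: "A \<le> u \<or> v \<le> - A"
  shows "norm (integral {u..v} (\<lambda>x. of_real (h x y) * cis (- k1 * x))) \<le> 3 * C / (\<bar>k1\<bar> * A)"
proof -
  have h_le: "\<bar>h x y\<bar> \<le> C / A" if "A \<le> \<bar>x\<bar>" for x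
    using h_decay_x[of x y] C_nonneg that A
    by (smt (verit, best) divide_left_mono mult_pos_pos)
  have hx_le: "\<bar>hx x y\<bar> \<le> C * (1 / x\<^sup>2)" if "x \<in> {u..v}" for x
  proof -
    have "0 < x\<^sup>2" using that side A by auto
    then have "C / (1 + x\<^sup>2 + y\<^sup>2) \<le> C / x\<^sup>2"
      using C_nonneg by (intro divide_left_mono) (auto simp: add_pos_nonneg)
    then show ?thesis using hx_decay[of x y] by simp
  qed
  have "norm (integral {u..v} (\<lambda>x. of_real (h x y) * cis (- k1 * x)))
      \<le> (\<bar>h u y\<bar> + \<bar>h v y\<bar> + integral {u..v} (\<lambda>x. C * (1 / x\<^sup>2))) / \<bar>k1\<bar>"
    using h_deriv_x hx_le integrable_inverse_square[OF A uv side]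
    by (intro norm_integral_mult_cis_le k1 uv integrable_on_mult_right)
  also have "\<dots> = (\<bar>h u y\<bar> + \<bar>h v y\<bar> + C * integral {u..v} (\<lambda>x. 1 / x\<^sup>2)) / \<bar>k1\<bar>"
    by (simp only: integral_mult_right)
  also have "\<dots> \<le> (C / A + C / A + C * (1 / A)) / \<bar>k1\<bar>"
    using h_le[of u] h_le[of v] integral_inverse_square_le[OF A uv side] C_nonneg side uv
    by (intro divide_right_mono add_mono mult_left_mono) auto
  also have "\<dots> = 3 * C / (\<bar>k1\<bar> * A)"
    by (simp add: field_simps)
  finally show ?thesis .
qed

lemma dist_integral_x_symmetric_le:
  assumes r: "0 < r" "r \<le> r'"
  shows "dist (integral {-r'..r'} (\<lambda>x. of_real (h x y) * cis (- k1 * x)))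
              (integral {-r..r} (\<lambda>x. of_real (h x y) * cis (- k1 * x))) \<le> 6 * C / \<bar>k1\<bar> / r"
proof -
  let ?I = "\<lambda>p q. integral {p..q} (\<lambda>x. of_real (h x y) * cis (- k1 * x))"
  have "?I (-r') r' = ?I (-r') (-r) + ?I (-r) r'"
    by (rule Henstock_Kurzweil_Integration.integral_combine[symmetric]) (use r integrable_h_x in auto)
  moreover have "?I (-r) r' = ?I (-r) r + ?I r r'"
    by (rule Henstock_Kurzweil_Integration.integral_combine[symmetric]) (use r integrable_h_x in auto)
  ultimately have "dist (?I (-r') r') (?I (-r) r) = norm (?I (-r') (-r) + ?I r r')"
    by (simp add: dist_norm)
  also have "\<dots> \<le> 3 * C / (\<bar>k1\<bar> * r) + 3 * C / (\<bar>k1\<bar> * r)"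
    using r by (intro norm_triangle_mono norm_integral_x_tail_le) auto
  also have "\<dots> = 6 * C / \<bar>k1\<bar> / r"
    by (simp add: field_simps)
  finally show ?thesis .
qed

lemma partial_fourier_rate:
  assumes "0 < r"
  shows "dist (integral {-r..r} (\<lambda>x. of_real (h x y) * cis (- k1 * x))) (partial_fourier y)
           \<le> 6 * C / \<bar>k1\<bar> / r"
proof -
  let ?I = "\<lambda>r. integral {-r..r} (\<lambda>x. of_real (h x y) * cis (- k1 * x))"
  obtain L where L: "\<forall>r>0. dist (?I r) L \<le> 6 * C / \<bar>k1\<bar> / r"
    using limit_of_Cauchy_rate[OF dist_integral_x_symmetric_le] by blast
  then have "(?I \<longlongrightarrow> L) at_top"
    by (intro tendsto_at_top_of_rate[where M = "6 * C / \<bar>k1\<bar>"]) auto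
  then have "partial_fourier y = L"
    unfolding partial_fourier_def by (intro tendsto_Lim) auto
  with L assms show ?thesis
    by simp
qed

lemma partial_fourier_tendsto:
  "((\<lambda>r. integral {-r..r} (\<lambda>x. of_real (h x y) * cis (- k1 * x))) \<longlongrightarrow> partial_fourier y) at_top"
  by (rule tendsto_at_top_of_rate) (rule partial_fourier_rate)

lemma box_integral_swap:
  "box_integral a b c d =
     integral {c..d} (\<lambda>y. integral {a..b} (\<lambda>x. of_real (h x y) * cis (- k1 * x) * cis (- k2 * y)))"
proof -
  have "continuous_on (cbox (a, c) (b, d)) (\<lambda>(x, y). of_real (h x y) * cis (- k1 * x) * cis (- k2 * y))"
    using continuous_on_integrand by (simp add: split_def)
  from integral_swap_continuous[OF this] show ?thesis
    unfolding box_integral_def by (simp add: cbox_interval)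
qed

lemma box_integral_combine_y:
  assumes "c \<le> e" "e \<le> d"
  shows "box_integral a b c d = box_integral a b c e + box_integral a b e d"
proof -
  let ?F = "\<lambda>x y. of_real (h x y) * cis (- k1 * x) * cis (- k2 * y)"
  have continuous_y: "continuous_on S (?F x)" for S x
    by (intro continuous_intros continuous_on_curry_snd[OF continuous_h])
  have continuous_x: "continuous_on S (\<lambda>x. integral {c..d} (?F x))" for S c d
    by (rule continuous_on_parametric_integral) (rule continuous_on_integrand)
  have "box_integral a b c d = integral {a..b} (\<lambda>x. integral {c..e} (?F x) + integral {e..d} (?F x))"
    unfolding box_integral_def
    by (intro integral_cong Henstock_Kurzweil_Integration.integral_combine[symmetric] assms
        integrable_continuous_interval continuous_y)
  also have "\<dots> = box_integral a b c e + box_integral a b e d"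
    unfolding box_integral_def
    by (intro integral_add integrable_continuous_interval continuous_x)
  finally show ?thesis .
qed

lemma norm_integral_hy_le:
  assumes A: "0 < A" and uv: "u \<le> v" and side: "A \<le> u \<or> v \<le> - A"
  shows "norm (integral {u..v} (\<lambda>y. of_real (hy x y) * cis (- k2 * y)))
           \<le> K * (1 / (A\<^sup>2 + x\<^sup>2)) + C * (1 + R\<^sup>2) / A * (1 / (1\<^sup>2 + x\<^sup>2))"
proof (cases "R \<le> \<bar>x\<bar>")
  case True
  have "norm (integral {u..v} (\<lambda>y. of_real (hy x y) * cis (- k2 * y))) \<le> K / (1 + x\<^sup>2 + A\<^sup>2)"
    using True A uv side by (intro hy_oscillatory_bound) auto
  also have "\<dots> \<le> K * (1 / (A\<^sup>2 + x\<^sup>2))"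
    using K_nonneg A by (simp add: divide_left_mono add_pos_nonneg)
  moreover have "0 \<le> C * (1 + R\<^sup>2) / A * (1 / (1\<^sup>2 + x\<^sup>2))"
    using C_nonneg A by (simp add: add_pos_nonneg)
  ultimately show ?thesis
    by linarith
next
  case False
  have "norm (integral {u..v} (\<lambda>y. of_real (hy x y) * cis (- k2 * y)))
      \<le> integral {u..v} (\<lambda>y. C * (1 / y\<^sup>2))"
  proof (rule integral_norm_bound_integral)
    show "(\<lambda>y. of_real (hy x y) * cis (- k2 * y)) integrable_on {u..v}"
      by (intro integrable_continuous_interval continuous_intros continuous_on_curry_snd[OF continuous_hy])
    show "(\<lambda>y. C * (1 / y\<^sup>2)) integrable_on {u..v}"
      by (intro integrable_on_mult_right integrable_inverse_square[OF A uv side])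
    fix y assume "y \<in> {u..v}"
    then have "0 < y\<^sup>2" using side A by auto
    then have "C / (1 + x\<^sup>2 + y\<^sup>2) \<le> C / y\<^sup>2"
      using C_nonneg by (intro divide_left_mono) (auto simp: add_pos_nonneg)
    then show "norm (of_real (hy x y) * cis (- k2 * y)) \<le> C * (1 / y\<^sup>2)"
      using hy_decay[of x y] by (simp add: norm_mult)
  qed
  also have "\<dots> \<le> C * (1 / A)"
    unfolding integral_mult_right
    using integral_inverse_square_le[OF A uv side] C_nonneg by (rule mult_left_mono)
  also have "\<dots> \<le> C * (1 + R\<^sup>2) / A * (1 / (1\<^sup>2 + x\<^sup>2))"
  proof -
    have "\<bar>x\<bar> \<le> \<bar>R\<bar>"
      using False by linarith
    then have "x\<^sup>2 \<le> R\<^sup>2"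
      by (simp add: abs_le_square_iff)
    then have "1 \<le> (1 + R\<^sup>2) / (1 + x\<^sup>2)"
      by (simp add: add_pos_nonneg)
    then have "C / A * 1 \<le> C / A * ((1 + R\<^sup>2) / (1 + x\<^sup>2))"
      using C_nonneg A by (intro mult_left_mono) auto
    then show ?thesis by simp
  qed
  moreover have "0 \<le> K * (1 / (A\<^sup>2 + x\<^sup>2))"
    using K_nonneg A by (simp add: add_pos_nonneg)
  ultimately show ?thesis
    by linarith
qed

lemma integrable_integral_hy:
  "(\<lambda>x. integral {u..v} (\<lambda>y. of_real (hy x y) * cis (- k2 * y)) * cis (- k1 * x)) integrable_on {a..b}"
proof -
  have "continuous_on UNIV (\<lambda>z. of_real (hy (fst z) (snd z)) * cis (- k2 * snd z))"
    by (intro continuous_intros continuous_on_compose2[OF continuous_hy]) auto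
  then have "continuous_on {a..b} (\<lambda>x. integral {u..v} (\<lambda>y. of_real (hy x y) * cis (- k2 * y)))"
    by (rule continuous_on_parametric_integral)
  then show ?thesis
    by (intro integrable_continuous_interval continuous_on_mult continuous_intros)
qed

lemma box_integral_by_parts_y:
  assumes uv: "u \<le> v"
  shows "box_integral a b u v =
    (\<i> / of_real k2 * cis (- k2 * v)) * integral {a..b} (\<lambda>x. of_real (h x v) * cis (- k1 * x))
    - (\<i> / of_real k2 * cis (- k2 * u)) * integral {a..b} (\<lambda>x. of_real (h x u) * cis (- k1 * x))
    - (\<i> / of_real k2) * integral {a..b}
        (\<lambda>x. integral {u..v} (\<lambda>y. of_real (hy x y) * cis (- k2 * y)) * cis (- k1 * x))"
proof -
  define Psi where "Psi x = integral {u..v} (\<lambda>y. of_real (hy x y) * cis (- k2 * y))" for x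
  have inner: "integral {u..v} (\<lambda>y. of_real (h x y) * cis (- k1 * x) * cis (- k2 * y)) =
      (\<i> / of_real k2 * cis (- k2 * v)) * (of_real (h x v) * cis (- k1 * x))
      - (\<i> / of_real k2 * cis (- k2 * u)) * (of_real (h x u) * cis (- k1 * x))
      - (\<i> / of_real k2) * (Psi x * cis (- k1 * x))" for x
  proof -
    have "integral {u..v} (\<lambda>y. of_real (h x y) * cis (- k1 * x) * cis (- k2 * y))
        = cis (- k1 * x) * integral {u..v} (\<lambda>y. of_real (h x y) * cis (- k2 * y))"
      by (subst integral_mult_right[symmetric]) (simp add: ac_simps)
    also have "integral {u..v} (\<lambda>y. of_real (h x y) * cis (- k2 * y)) =
         (\<i> / of_real k2) * (of_real (h x v) * cis (- k2 * v) - of_real (h x u) * cis (- k2 * u))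
         - (\<i> / of_real k2) * Psi x"
      unfolding Psi_def using integration_by_parts_cis(2)[OF k2 uv, of "h x" "hy x"] h_deriv_y by simp
    finally show ?thesis
      by (simp add: algebra_simps)
  qed
  show ?thesis
    unfolding box_integral_def inner Psi_def[symmetric]
    using integrable_h_x integrable_integral_hy[of u v a b, folded Psi_def]
    by (simp only: integral_diff integrable_on_mult_right integrable_diff integral_mult_right)
qed

lemma norm_integral_integral_hy_le:
  assumes A: "0 < A" and uv: "u \<le> v" and side: "A \<le> u \<or> v \<le> - A"
  shows "norm (integral {a..b}
      (\<lambda>x. integral {u..v} (\<lambda>y. of_real (hy x y) * cis (- k2 * y)) * cis (- k1 * x)))
    \<le> (K + C * (1 + R\<^sup>2)) * pi / A"
proof -
  define B where "B x = K * (1 / (A\<^sup>2 + x\<^sup>2)) + C * (1 + R\<^sup>2) / A * (1 / (1\<^sup>2 + x\<^sup>2))" for x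
  have "norm (integral {a..b}
      (\<lambda>x. integral {u..v} (\<lambda>y. of_real (hy x y) * cis (- k2 * y)) * cis (- k1 * x)))
    \<le> integral {a..b} B"
    unfolding B_def using A norm_integral_hy_le[OF A uv side]
    by (intro integral_norm_bound_integral integrable_integral_hy integrable_add integrable_on_mult_right
        integrable_inverse_sum_squares) (auto simp: norm_mult)
  also have "\<dots> = K * integral {a..b} (\<lambda>x. 1 / (A\<^sup>2 + x\<^sup>2))
      + C * (1 + R\<^sup>2) / A * integral {a..b} (\<lambda>x. 1 / (1\<^sup>2 + x\<^sup>2))"
    unfolding B_def using A
    by (simp only: integral_add integrable_on_mult_right integrable_inverse_sum_squares
        integral_mult_right zero_less_one)
  also have "\<dots> \<le> K * (pi / A) + C * (1 + R\<^sup>2) / A * (pi / 1)"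
    using integral_inverse_sum_squares_le[OF A] integral_inverse_sum_squares_le[of 1] K_nonneg C_nonneg A
    by (intro add_mono mult_left_mono) (auto simp: add_pos_nonneg)
  also have "\<dots> = (K + C * (1 + R\<^sup>2)) * pi / A"
    using A by (simp add: field_simps)
  finally show ?thesis .
qed

definition strip_bound :: real where
  "strip_bound = (2 * (2 + pi) * C / \<bar>k1\<bar> + (K + C * (1 + R\<^sup>2)) * pi) / \<bar>k2\<bar>"

lemma norm_box_integral_strip_le:
  assumes ab: "a \<le> b" and uv: "u \<le> v" and A: "0 < A" and side: "A \<le> u \<or> v \<le> - A"
  shows "norm (box_integral a b u v) \<le> strip_bound / A"
proof -
  let ?X = "\<lambda>y. integral {a..b} (\<lambda>x. of_real (h x y) * cis (- k1 * x))"
  let ?Psi = "\<lambda>x. integral {u..v} (\<lambda>y. of_real (hy x y) * cis (- k2 * y))"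
  have X_le: "norm (?X y) \<le> (2 + pi) * C / \<bar>k1\<bar> / A" if "A \<le> \<bar>y\<bar>" for y
  proof -
    have "norm (?X y) \<le> (2 + pi) * C / (\<bar>k1\<bar> * \<bar>y\<bar>)"
      using that A ab by (intro norm_integral_x_le) auto
    also have "\<dots> \<le> (2 + pi) * C / (\<bar>k1\<bar> * A)"
      using that A k1 C_nonneg by (intro divide_left_mono mult_left_mono mult_pos_pos) auto
    finally show ?thesis by simp
  qed
  have scale: "norm (\<i> / of_real k2 * w) = norm w / \<bar>k2\<bar>"
    "norm (\<i> / of_real k2 * cis t * w) = norm w / \<bar>k2\<bar>" for w t
    by (simp_all add: norm_mult norm_divide)
  let ?P = "\<i> / of_real k2 * cis (- k2 * v) * ?X v" and ?Q = "\<i> / of_real k2 * cis (- k2 * u) * ?X u"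
    and ?S = "\<i> / of_real k2 * integral {a..b} (\<lambda>x. ?Psi x * cis (- k1 * x))"
  have "norm (box_integral a b u v) \<le> norm ?P + norm ?Q + norm ?S"
    unfolding box_integral_by_parts_y[OF uv]
    using norm_triangle_ineq4[of "?P - ?Q" ?S] norm_triangle_ineq4[of ?P ?Q] by linarith
  also have "\<dots> \<le> ((2 + pi) * C / \<bar>k1\<bar> / A) / \<bar>k2\<bar> + ((2 + pi) * C / \<bar>k1\<bar> / A) / \<bar>k2\<bar>
      + ((K + C * (1 + R\<^sup>2)) * pi / A) / \<bar>k2\<bar>"
    unfolding scale using side uv A
    by (intro add_mono divide_right_mono X_le norm_integral_integral_hy_le) auto
  also have "\<dots> = strip_bound / A"
    unfolding strip_bound_def by (simp add: add_divide_distrib algebra_simps)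
  finally show ?thesis .
qed

lemma dist_box_integral_lower_le:
  assumes A: "0 < A" and ab: "a \<le> b" and c: "c \<le> -A" "c' \<le> -A"
  shows "dist (box_integral a b c 0) (box_integral a b c' 0) \<le> strip_bound / A"
proof -
  have *: "dist (box_integral a b e 0) (box_integral a b e' 0) \<le> strip_bound / A"
    if "e \<le> e'" "e' \<le> -A" for e e'
  proof -
    have "box_integral a b e 0 = box_integral a b e e' + box_integral a b e' 0"
      using that A by (intro box_integral_combine_y) auto
    then have "dist (box_integral a b e 0) (box_integral a b e' 0) = norm (box_integral a b e e')"
      by (simp add: dist_norm)
    also have "\<dots> \<le> strip_bound / A"
      using that A ab by (intro norm_box_integral_strip_le) auto
    finally show ?thesis .
  qed
  show ?thesis
    using *[of c c'] *[of c' c] c by (cases "c \<le> c'") (auto simp: dist_commute)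
qed

lemma dist_box_integral_upper_le:
  assumes A: "0 < A" and ab: "a \<le> b" and d: "A \<le> d" "A \<le> d'"
  shows "dist (box_integral a b 0 d) (box_integral a b 0 d') \<le> strip_bound / A"
proof -
  have *: "dist (box_integral a b 0 e) (box_integral a b 0 e') \<le> strip_bound / A"
    if "A \<le> e" "e \<le> e'" for e e'
  proof -
    have "box_integral a b 0 e' = box_integral a b 0 e + box_integral a b e e'"
      using that A by (intro box_integral_combine_y) auto
    then have "dist (box_integral a b 0 e) (box_integral a b 0 e') = norm (box_integral a b e e')"
      by (simp add: dist_norm)
    also have "\<dots> \<le> strip_bound / A"
      using that A ab by (intro norm_box_integral_strip_le) auto
    finally show ?thesis .
  qed
  show ?thesis
    using *[of d d'] *[of d' d] d by (cases "d \<le> d'") (auto simp: dist_commute)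
qed

lemma box_integral_Cauchy_y:
  assumes A: "0 < A" "a \<le> b" "c \<le> -A" "c' \<le> -A" "A \<le> d" "A \<le> d'"
  shows "dist (box_integral a b c d) (box_integral a b c' d') \<le> 2 * strip_bound / A"
proof -
  have "box_integral a b c d = box_integral a b c 0 + box_integral a b 0 d"
    using A by (intro box_integral_combine_y) auto
  moreover have "box_integral a b c' d' = box_integral a b c' 0 + box_integral a b 0 d'"
    using A by (intro box_integral_combine_y) auto
  ultimately have "dist (box_integral a b c d) (box_integral a b c' d')
      \<le> dist (box_integral a b c 0) (box_integral a b c' 0) + dist (box_integral a b 0 d) (box_integral a b 0 d')"
    by (simp only: dist_triangle_add)
  also have "\<dots> \<le> strip_bound / A + strip_bound / A"
    using A by (intro add_mono dist_box_integral_lower_le dist_box_integral_upper_le)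
  finally show ?thesis
    by simp
qed

lemma box_integral_tendsto_integral_partial_fourier:
  "(\<lambda>y. partial_fourier y * cis (- k2 * y)) integrable_on {c..d} \<and>
   ((\<lambda>r. box_integral (-r) r c d) \<longlongrightarrow> integral {c..d} (\<lambda>y. partial_fourier y * cis (- k2 * y))) at_top"
proof -
  let ?I = "\<lambda>r y. integral {-r..r} (\<lambda>x. of_real (h x y) * cis (- k1 * x))"
  have "uniform_limit {c..d} (\<lambda>r y. ?I r y * cis (- k2 * y)) (\<lambda>y. partial_fourier y * cis (- k2 * y)) at_top"
  proof (rule uniform_limit_at_top_of_rate[where M = "6 * C / \<bar>k1\<bar>"])
    fix r y :: real
    assume "0 < r"
    have "dist (?I r y * cis (- k2 * y)) (partial_fourier y * cis (- k2 * y)) = dist (?I r y) (partial_fourier y)"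
      by (simp add: dist_norm left_diff_distrib[symmetric] norm_mult)
    with partial_fourier_rate[OF \<open>0 < r\<close>]
    show "dist (?I r y * cis (- k2 * y)) (partial_fourier y * cis (- k2 * y)) \<le> 6 * C / \<bar>k1\<bar> / r"
      by simp
  qed
  moreover have "continuous_on {c..d} (\<lambda>y. ?I r y * cis (- k2 * y))" for r
  proof -
    have "continuous_on UNIV (\<lambda>z. of_real (h (snd z) (fst z)) * cis (- k1 * snd z))"
      by (intro continuous_intros continuous_on_curry_swap[OF continuous_h])
    then have "continuous_on {c..d} (?I r)"
      by (rule continuous_on_parametric_integral)
    then show ?thesis
      by (intro continuous_on_mult continuous_intros)
  qed
  ultimately obtain I J where
      I: "\<And>r. ((\<lambda>y. ?I r y * cis (- k2 * y)) has_integral I r) {c..d}"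
    and J: "((\<lambda>y. partial_fourier y * cis (- k2 * y)) has_integral J) {c..d}"
    and IJ: "(I \<longlongrightarrow> J) at_top"
    by (rule uniform_limit_integral) auto
  have "I r = box_integral (-r) r c d" for r
  proof -
    have "I r = integral {c..d} (\<lambda>y. ?I r y * cis (- k2 * y))"
      using integral_unique[OF I[of r]] by simp
    also have "\<dots> = integral {c..d}
        (\<lambda>y. integral {-r..r} (\<lambda>x. of_real (h x y) * cis (- k1 * x) * cis (- k2 * y)))"
      by (simp only: integral_mult_left)
    finally show ?thesis
      by (simp only: box_integral_swap)
  qed
  then have "I = (\<lambda>r. box_integral (-r) r c d)"
    by (rule ext)
  with IJ J show ?thesis
    by (auto simp: integral_unique)
qed

lemma has_improper_integral_R_partial_fourier:
  assumes limit: "\<And>A a b c d. 0 < A \<Longrightarrow> a \<le> -A \<Longrightarrow> A \<le> b \<Longrightarrow> c \<le> -A \<Longrightarrow> A \<le> d \<Longrightarrow>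
                    dist (box_integral a b c d) L \<le> M / A"
  shows "has_improper_integral_R (\<lambda>y. partial_fourier y * cis (- k2 * y)) L"
  unfolding has_improper_integral_R_def
proof (intro conjI allI)
  show "(\<lambda>y. partial_fourier y * cis (- k2 * y)) integrable_on {c..d}" for c d
    using box_integral_tendsto_integral_partial_fourier by blast
  show "((\<lambda>p. integral {fst p..snd p} (\<lambda>y. partial_fourier y * cis (- k2 * y))) \<longlongrightarrow> L) (at_bot \<times>\<^sub>F at_top)"
  proof (rule tendsto_prod_filter_of_rate)
    show "eventually (\<lambda>c. c \<le> -A) at_bot" "eventually (\<lambda>d. A \<le> d) at_top" for A :: real
      by (simp_all add: eventually_le_at_bot eventually_ge_at_top)
    fix A c d :: real
    assume A: "0 < A" "c \<le> -A" "A \<le> d"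
    have "((\<lambda>r. dist (box_integral (-r) r c d) L)
        \<longlongrightarrow> dist (integral {c..d} (\<lambda>y. partial_fourier y * cis (- k2 * y))) L) at_top"
      using box_integral_tendsto_integral_partial_fourier by (intro tendsto_dist tendsto_const) blast
    moreover have "eventually (\<lambda>r. dist (box_integral (-r) r c d) L \<le> M / A) at_top"
      by (rule eventually_mono[OF eventually_ge_at_top[of A]]) (intro limit; use A in linarith)
    ultimately have "dist (integral {c..d} (\<lambda>y. partial_fourier y * cis (- k2 * y))) L \<le> M / A"
      by (rule tendsto_upperbound) simp
    then show "dist (integral {fst (c, d)..snd (c, d)} (\<lambda>y. partial_fourier y * cis (- k2 * y))) L \<le> M / A"
      by simp
  qed
qed

end

locale oscillatory_decay_xy =
  Y: oscillatory_decay h hx hy k1 k2 C R K +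
  X: oscillatory_decay "\<lambda>y x. h x y" "\<lambda>y x. hy x y" "\<lambda>y x. hx x y" k2 k1 C' R' K'
  for h hx hy :: "real \<Rightarrow> real \<Rightarrow> real" and k1 k2 C R K C' R' K' :: real
begin

lemma box_integral_transpose: "X.box_integral c d a b = Y.box_integral a b c d"
  unfolding Y.box_integral_swap[of a b c d] X.box_integral_def
  by (intro integral_cong) (simp add: ac_simps)

lemma box_integral_limit:
  obtains L M where "\<And>A a b c d. 0 < A \<Longrightarrow> a \<le> -A \<Longrightarrow> A \<le> b \<Longrightarrow> c \<le> -A \<Longrightarrow> A \<le> d \<Longrightarrow>
      dist (Y.box_integral a b c d) L \<le> M / A"
proof -
  let ?M = "2 * Y.strip_bound + 2 * X.strip_bound"
  have Cauchy: "dist (Y.box_integral a b c d) (Y.box_integral a' b' c' d') \<le> ?M / A"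
    if "0 < A" "a \<le> -A" "a' \<le> -A" "A \<le> b" "A \<le> b'" "c \<le> -A" "c' \<le> -A" "A \<le> d" "A \<le> d'"
    for A a a' b b' c c' d d'
  proof -
    (* Moving the y-limits is controlled by Y, moving the x-limits by the transposed instance X. *)
    have "dist (Y.box_integral a b c d) (Y.box_integral a' b' c' d')
        \<le> dist (Y.box_integral a b c d) (Y.box_integral a b c' d')
          + dist (X.box_integral c' d' a b) (X.box_integral c' d' a' b')"
      using dist_triangle[of "Y.box_integral a b c d" _ "Y.box_integral a b c' d'"]
      by (simp add: box_integral_transpose)
    also have "\<dots> \<le> 2 * Y.strip_bound / A + 2 * X.strip_bound / A"
      using that by (intro add_mono Y.box_integral_Cauchy_y X.box_integral_Cauchy_y) auto
    finally show ?thesis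
      by (simp add: add_divide_distrib)
  qed
  let ?diag = "\<lambda>r. Y.box_integral (-r) r (-r) r"
  obtain L where L: "\<forall>r>0. dist (?diag r) L \<le> ?M / r"
    using limit_of_Cauchy_rate[of ?diag ?M] Cauchy by force
  show thesis
  proof (rule that[of L "2 * ?M"])
    fix A a b c d :: real
    assume A: "0 < A" "a \<le> -A" "A \<le> b" "c \<le> -A" "A \<le> d"
    have "dist (Y.box_integral a b c d) L \<le> dist (Y.box_integral a b c d) (?diag A) + dist (?diag A) L"
      by (rule dist_triangle)
    also have "\<dots> \<le> ?M / A + ?M / A"
      using A L by (intro add_mono Cauchy) auto
    finally show "dist (Y.box_integral a b c d) L \<le> 2 * ?M / A"
      by simp
  qed
qed

theorem iterated_fourier_limits:
  "\<exists>L. has_improper_integral_R (\<lambda>y. Y.partial_fourier y * cis (- k2 * y)) L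
     \<and> has_improper_integral_R (\<lambda>x. X.partial_fourier x * cis (- k1 * x)) L
     \<and> ((\<lambda>p. integral {- fst p..fst p} (\<lambda>y. integral {- snd p..snd p}
           (\<lambda>x. of_real (h x y) * cis (- k1 * x) * cis (- k2 * y)))) \<longlongrightarrow> L) (at_top \<times>\<^sub>F at_top)"
proof -
  obtain L M where L: "\<And>A a b c d. 0 < A \<Longrightarrow> a \<le> -A \<Longrightarrow> A \<le> b \<Longrightarrow> c \<le> -A \<Longrightarrow> A \<le> d \<Longrightarrow>
      dist (Y.box_integral a b c d) L \<le> M / A"
    using box_integral_limit by blast
  have "has_improper_integral_R (\<lambda>y. Y.partial_fourier y * cis (- k2 * y)) L"
    using L by (rule Y.has_improper_integral_R_partial_fourier)
  moreover have "has_improper_integral_R (\<lambda>x. X.partial_fourier x * cis (- k1 * x)) L"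
    using L by (intro X.has_improper_integral_R_partial_fourier) (simp add: box_integral_transpose)
  moreover have "((\<lambda>p. integral {- fst p..fst p} (\<lambda>y. integral {- snd p..snd p}
           (\<lambda>x. of_real (h x y) * cis (- k1 * x) * cis (- k2 * y)))) \<longlongrightarrow> L) (at_top \<times>\<^sub>F at_top)"
  proof (rule tendsto_prod_filter_of_rate)
    show "eventually (\<lambda>m. A \<le> m) at_top" "eventually (\<lambda>n. A \<le> n) at_top" for A :: real
      by (rule eventually_ge_at_top)+
    fix A m n :: real
    assume "0 < A" "A \<le> m" "A \<le> n"
    then show "dist (integral {- fst (m, n)..fst (m, n)} (\<lambda>y. integral {- snd (m, n)..snd (m, n)}
           (\<lambda>x. of_real (h x y) * cis (- k1 * x) * cis (- k2 * y)))) L \<le> M / A"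
      using L[of A "-n" n "-m" m] by (simp add: Y.box_integral_swap)
  qed
  ultimately show ?thesis
    by blast
qed

end

section \<open>Quasi normal and quasi split normal functions\<close>

lemma smooth2_D:
  assumes "smooth2 g"
  shows "g differentiable (at z)" "smooth2 (partial_x g)" "smooth2 (partial_y g)"
  using assms by (auto elim: smooth2.cases)

lemma smooth2_continuous: "smooth2 g \<Longrightarrow> continuous_on S g"
  by (meson continuous_at_imp_continuous_on differentiable_imp_continuous_within smooth2_D(1))

lemma has_real_derivative_partial_x:
  assumes "g differentiable (at (x, y))"
  shows "((\<lambda>t. g (t, y)) has_real_derivative partial_x g (x, y)) (at x)"
proof -
  have "(g \<circ> (\<lambda>t. (t, y))) differentiable (at x)"
    using assms by (intro differentiable_chain_at derivative_intros) auto
  then show ?thesis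
    by (simp add: partial_x_def o_def DERIV_deriv_iff_real_differentiable)
qed

lemma has_real_derivative_partial_y:
  assumes "g differentiable (at (x, y))"
  shows "((\<lambda>t. g (x, t)) has_real_derivative partial_y g (x, y)) (at y)"
proof -
  have "(g \<circ> (\<lambda>t. (x, t))) differentiable (at y)"
    using assms by (intro differentiable_chain_at derivative_intros) auto
  then show ?thesis
    by (simp add: partial_y_def o_def DERIV_deriv_iff_real_differentiable)
qed

lemma partial_x_swap: "partial_x (g \<circ> prod.swap) = partial_y g \<circ> prod.swap"
  by (simp add: fun_eq_iff partial_x_def partial_y_def)

lemma partial_y_swap: "partial_y (g \<circ> prod.swap) = partial_x g \<circ> prod.swap"
  by (simp add: fun_eq_iff partial_x_def partial_y_def)

lemma smooth2_swap:
  assumes "smooth2 g"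
  shows "smooth2 (g \<circ> prod.swap)"
proof (rule smooth2.coinduct[where X = "\<lambda>f. \<exists>g. f = g \<circ> prod.swap \<and> smooth2 g"])
  show "\<exists>g'. g \<circ> prod.swap = g' \<circ> prod.swap \<and> smooth2 g'"
    using assms by blast
next
  fix f assume "\<exists>g. f = g \<circ> prod.swap \<and> smooth2 g"
  then obtain g where f: "f = g \<circ> prod.swap" and g: "smooth2 g"
    by blast
  have "prod.swap differentiable (at z)" for z :: "real \<times> real"
    unfolding prod.swap_def[abs_def]
    by (intro bounded_linear_imp_differentiable bounded_linear_Pair bounded_linear_fst bounded_linear_snd)
  then have "f differentiable (at z)" for z
    unfolding f using smooth2_D(1)[OF g] by (intro differentiable_chain_at)
  moreover have "partial_x f = partial_y g \<circ> prod.swap" "partial_y f = partial_x g \<circ> prod.swap"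
    unfolding f by (rule partial_x_swap, rule partial_y_swap)
  ultimately show "\<exists>f'. f = f' \<and> (\<forall>z. f' differentiable (at z))
      \<and> ((\<exists>g. partial_x f' = g \<circ> prod.swap \<and> smooth2 g) \<or> smooth2 (partial_x f'))
      \<and> ((\<exists>g. partial_y f' = g \<circ> prod.swap \<and> smooth2 g) \<or> smooth2 (partial_y f'))"
    using smooth2_D(2,3)[OF g] by blast
qed

lemma norm_swap: "norm (prod.swap z) = norm z"
  by (cases z) (simp add: norm_Pair add.commute)

lemma very_moderate_decrease_swap:
  assumes "very_moderate_decrease g"
  shows "very_moderate_decrease (g \<circ> prod.swap)"
proof -
  obtain C where "C > 0" "\<forall>z. 1 < norm z \<longrightarrow> \<bar>g z\<bar> \<le> C / norm z"
    using assms unfolding very_moderate_decrease_def by blast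
  then show ?thesis
    unfolding very_moderate_decrease_def by (metis comp_apply norm_swap)
qed

lemma moderate_decrease_swap:
  assumes "moderate_decrease g"
  shows "moderate_decrease (g \<circ> prod.swap)"
proof -
  obtain C where "C > 0" "\<forall>z. 1 < norm z \<longrightarrow> \<bar>g z\<bar> \<le> C / (norm z)\<^sup>2"
    using assms unfolding moderate_decrease_def by blast
  then show ?thesis
    unfolding moderate_decrease_def by (metis comp_apply norm_swap)
qed

lemma basic_conditions_swap:
  "basic_conditions g \<Longrightarrow> basic_conditions (g \<circ> prod.swap)"
  unfolding basic_conditions_def partial_x_swap partial_y_swap
  by (simp add: very_moderate_decrease_swap moderate_decrease_swap)

lemma condition_v'_swap:
  assumes "condition_v' g"
  shows "condition_v' (g \<circ> prod.swap)"
  using assms unfolding condition_v'_def by simp blast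

lemma quasi_normal_swap: "quasi_normal g \<Longrightarrow> quasi_normal (g \<circ> prod.swap)"
  unfolding quasi_normal_def by (simp add: smooth2_swap basic_conditions_swap condition_v'_swap)

lemma quasi_split_normal_swap:
  assumes "quasi_split_normal g"
  shows "quasi_split_normal (g \<circ> prod.swap)"
proof -
  obtain R f1 f2 where "quasi_normal f1" "quasi_normal f2" and eq: "\<forall>z. R \<le> norm z \<longrightarrow> g z = f1 z + f2 z"
    using assms unfolding quasi_split_normal_def by blast
  moreover have "\<forall>z. R \<le> norm z \<longrightarrow> (g \<circ> prod.swap) z = (f1 \<circ> prod.swap) z + (f2 \<circ> prod.swap) z"
    using eq by (metis comp_apply norm_swap)
  ultimately show ?thesis
    using assms unfolding quasi_split_normal_def
    by (meson quasi_normal_def quasi_normal_swap smooth2_swap basic_conditions_swap)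
qed

lemma divide_le_two_divide_one_plus:
  fixes c t :: real
  assumes "1 \<le> t" "0 \<le> c"
  shows "c / t \<le> 2 * c / (1 + t)"
proof -
  have "c * (1 + t) \<le> (2 * c) * t"
    using assms mult_left_mono[of 1 t c] by (simp add: algebra_simps)
  then show ?thesis
    using assms by (simp add: divide_simps)
qed

lemma le_two_divide_one_plus:
  fixes c t :: real
  assumes "0 \<le> t" "t \<le> 1" "0 \<le> c"
  shows "c \<le> 2 * c / (1 + t)"
proof -
  have "c * (1 + t) \<le> 2 * c"
    using assms mult_left_mono[of t 1 c] by (simp add: algebra_simps)
  then show ?thesis
    using assms by (simp add: divide_simps)
qed

lemma decay_bound_everywhere:
  fixes g :: "real \<times> real \<Rightarrow> real"
  assumes continuous: "continuous_on UNIV g" and decay: "\<And>z. 1 < norm z \<Longrightarrow> \<bar>g z\<bar> \<le> C / norm z ^ n"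
  obtains D where "0 \<le> D" "\<And>z. \<bar>g z\<bar> \<le> D / (1 + norm z ^ n)"
proof -
  have "bounded (g ` cball 0 1)"
    by (intro compact_imp_bounded compact_continuous_image continuous_on_subset[OF continuous]) auto
  then obtain B where B_bound: "\<forall>w\<in>g ` cball 0 1. norm w \<le> B"
    unfolding bounded_iff by blast
  have B: "\<bar>g z\<bar> \<le> \<bar>B\<bar>" if "norm z \<le> 1" for z
  proof -
    have "g z \<in> g ` cball 0 1"
      using that by simp
    with B_bound have "norm (g z) \<le> B"
      by blast
    then show ?thesis
      by simp
  qed
  let ?D = "2 * \<bar>C\<bar> + 2 * \<bar>B\<bar>"
  have "\<bar>g z\<bar> \<le> ?D / (1 + norm z ^ n)" for z
  proof (cases "1 < norm z")
    case True
    then have "1 \<le> norm z ^ n"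
      by (simp add: one_le_power)
    have "\<bar>g z\<bar> \<le> \<bar>C\<bar> / norm z ^ n"
      using decay[OF True] by (smt (verit) divide_right_mono zero_le_power norm_ge_zero)
    also have "\<dots> \<le> 2 * \<bar>C\<bar> / (1 + norm z ^ n)"
      using \<open>1 \<le> norm z ^ n\<close> by (intro divide_le_two_divide_one_plus) auto
    also have "\<dots> \<le> ?D / (1 + norm z ^ n)"
      by (intro divide_right_mono) auto
    finally show ?thesis .
  next
    case False
    then have "norm z ^ n \<le> 1"
      by (simp add: power_le_one)
    have "\<bar>g z\<bar> \<le> \<bar>B\<bar>"
      using B False by simp
    also have "\<dots> \<le> 2 * \<bar>B\<bar> / (1 + norm z ^ n)"
      using \<open>norm z ^ n \<le> 1\<close> by (intro le_two_divide_one_plus) auto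
    also have "\<dots> \<le> ?D / (1 + norm z ^ n)"
      by (intro divide_right_mono) auto
    finally show ?thesis .
  qed
  then show thesis
    by (intro that[of ?D]) auto
qed

lemma basic_conditions_decay:
  assumes smooth: "smooth2 g" and basic: "basic_conditions g"
  obtains C where "\<And>x y. \<bar>g (x, y)\<bar> \<le> C / (1 + \<bar>x\<bar>)" "\<And>x y. \<bar>g (x, y)\<bar> \<le> C / (1 + \<bar>y\<bar>)"
    "\<And>x y. \<bar>partial_x g (x, y)\<bar> \<le> C / (1 + x\<^sup>2 + y\<^sup>2)" "\<And>x y. \<bar>partial_y g (x, y)\<bar> \<le> C / (1 + x\<^sup>2 + y\<^sup>2)"
proof -
  obtain C0 where "\<forall>z. 1 < norm z \<longrightarrow> \<bar>g z\<bar> \<le> C0 / norm z ^ 1"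
    using basic unfolding basic_conditions_def very_moderate_decrease_def by auto
  then obtain D0 where D0: "0 \<le> D0" "\<And>z. \<bar>g z\<bar> \<le> D0 / (1 + norm z ^ 1)"
    using decay_bound_everywhere[OF smooth2_continuous[OF smooth]] by metis
  obtain C1 where "\<forall>z. 1 < norm z \<longrightarrow> \<bar>partial_x g z\<bar> \<le> C1 / norm z ^ 2"
    using basic unfolding basic_conditions_def moderate_decrease_def by auto
  then obtain D1 where D1: "0 \<le> D1" "\<And>z. \<bar>partial_x g z\<bar> \<le> D1 / (1 + norm z ^ 2)"
    using decay_bound_everywhere[OF smooth2_continuous[OF smooth2_D(2)[OF smooth]]] by metis
  obtain C2 where "\<forall>z. 1 < norm z \<longrightarrow> \<bar>partial_y g z\<bar> \<le> C2 / norm z ^ 2"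
    using basic unfolding basic_conditions_def moderate_decrease_def by auto
  then obtain D2 where D2: "0 \<le> D2" "\<And>z. \<bar>partial_y g z\<bar> \<le> D2 / (1 + norm z ^ 2)"
    using decay_bound_everywhere[OF smooth2_continuous[OF smooth2_D(3)[OF smooth]]] by metis
  let ?C = "D0 + D1 + D2"
  have norm_sq: "norm (x, y) ^ 2 = x\<^sup>2 + y\<^sup>2" for x y :: real
    by (simp add: norm_Pair)
  have le: "D / a \<le> ?C / b" if "0 \<le> D" "D \<le> ?C" "0 < b" "b \<le> a" for D a b
    using that D0(1) D1(1) D2(1) by (intro frac_le) auto
  show thesis
  proof (rule that)
    fix x y :: real
    have "\<bar>x\<bar> \<le> norm (x, y)" "\<bar>y\<bar> \<le> norm (x, y)"
      using norm_fst_le[of x y] norm_snd_le[of y x] by auto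
    then show "\<bar>g (x, y)\<bar> \<le> ?C / (1 + \<bar>x\<bar>)" "\<bar>g (x, y)\<bar> \<le> ?C / (1 + \<bar>y\<bar>)"
      using D0(1) D1(1) D2(1) by (auto intro!: order.trans[OF D0(2) le])
    have "1 + norm (x, y) ^ 2 = 1 + x\<^sup>2 + y\<^sup>2"
      by (simp add: norm_Pair)
    moreover have "0 < 1 + x\<^sup>2 + y\<^sup>2"
      by (simp add: add_pos_nonneg)
    ultimately show "\<bar>partial_x g (x, y)\<bar> \<le> ?C / (1 + x\<^sup>2 + y\<^sup>2)"
      "\<bar>partial_y g (x, y)\<bar> \<le> ?C / (1 + x\<^sup>2 + y\<^sup>2)"
      using D0(1) D1(1) D2(1) by (auto intro!: order.trans[OF D1(2) le] order.trans[OF D2(2) le])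
  qed
qed

lemma smooth2_continuous_on_slice_y:
  assumes "smooth2 g"
  shows "continuous_on S (\<lambda>y. g (x, y))"
  using continuous_on_curry_snd[of "\<lambda>a b. g (a, b)"] smooth2_continuous[OF assms] by simp

lemma oscillatory_tail_bound_quasi_normal:
  assumes "quasi_normal g" and k: "k \<noteq> 0"
  obtains R K where "oscillatory_tail_bound (\<lambda>x y. partial_y g (x, y)) k R K"
proof -
  have smooth: "smooth2 g" and basic: "basic_conditions g" and v: "condition_v' g"
    using assms(1) unfolding quasi_normal_def by auto
  obtain R B where bands: "\<And>s. R \<le> \<bar>s\<bar> \<Longrightarrow> zeros_in_bands B (deriv (deriv (\<lambda>y. g (s, y))))"
    using v unfolding condition_v'_def by blast
  obtain C where g_decay: "\<And>x y. \<bar>g (x, y)\<bar> \<le> C / (1 + \<bar>x\<bar>)"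
    and gy_decay: "\<And>x y. \<bar>partial_y g (x, y)\<bar> \<le> C / (1 + x\<^sup>2 + y\<^sup>2)"
    using basic_conditions_decay[OF smooth basic] by metis
  have C: "0 \<le> C"
    using g_decay[of 0 0] by simp
  have "oscillatory_tail_bound (\<lambda>x y. partial_y g (x, y)) k R (5 * ((4 / \<bar>k\<bar> + B) * C))"
    unfolding oscillatory_tail_bound_def
  proof (intro allI impI)
    fix x u v A :: real
    assume x: "R \<le> \<bar>x\<bar>" and A: "0 < A" and uv: "u \<le> v" and away: "\<forall>y\<in>{u..v}. A \<le> \<bar>y\<bar>"
    have smooth_y: "smooth2 (partial_y g)"
      using smooth by (rule smooth2_D)
    have gyy_bands: "zeros_in_bands B (\<lambda>y. partial_y (partial_y g) (x, y))"
      using bands[OF x] by (simp add: partial_y_def)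
    have gy_bound: "\<bar>partial_y g (x, t)\<bar> \<le> C / (1 + x\<^sup>2 + A\<^sup>2)" if "t \<in> {u..v}" for t
    proof -
      have "A\<^sup>2 \<le> t\<^sup>2"
        using away that A by (metis abs_le_square_iff abs_of_pos)
      then have "C / (1 + x\<^sup>2 + t\<^sup>2) \<le> C / (1 + x\<^sup>2 + A\<^sup>2)"
        using C by (intro divide_left_mono) (auto simp: add_pos_nonneg)
      with gy_decay[of x t] show ?thesis
        by linarith
    qed
    have "norm (integral {u..v} (\<lambda>y. of_real (partial_y g (x, y)) * cis (- k * y)))
        \<le> 5 * ((4 / \<bar>k\<bar> + B) * (C / (1 + x\<^sup>2 + A\<^sup>2)))"
      by (rule norm_integral_mult_cis_le_zeros_in_bands[OF k uv
          has_real_derivative_partial_y[OF smooth2_D(1)[OF smooth_y]]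
          smooth2_continuous_on_slice_y[OF smooth2_D(3)[OF smooth_y]] gy_bound gyy_bands])
    then show "norm (integral {u..v} (\<lambda>y. of_real (partial_y g (x, y)) * cis (- k * y)))
        \<le> 5 * ((4 / \<bar>k\<bar> + B) * C) / (1 + x\<^sup>2 + A\<^sup>2)"
      by simp
  qed
  then show thesis
    by (rule that)
qed

lemma partial_y_eq_sum:
  assumes "smooth2 f1" "smooth2 f2" and eq: "\<And>t. g (x, t) = f1 (x, t) + f2 (x, t)"
  shows "partial_y g (x, y) = partial_y f1 (x, y) + partial_y f2 (x, y)"
proof -
  have "((\<lambda>t. f1 (x, t) + f2 (x, t)) has_real_derivative partial_y f1 (x, y) + partial_y f2 (x, y)) (at y)"
    using assms by (intro DERIV_add has_real_derivative_partial_y smooth2_D)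
  then show ?thesis
    unfolding partial_y_def using eq by (simp add: DERIV_imp_deriv)
qed

lemma oscillatory_tail_bound_quasi_split_normal:
  assumes "quasi_split_normal g" and k: "k \<noteq> 0"
  obtains R K where "oscillatory_tail_bound (\<lambda>x y. partial_y g (x, y)) k R K"
proof -
  obtain R0 f1 f2 where f1: "quasi_normal f1" and f2: "quasi_normal f2"
    and eq: "\<forall>z. R0 \<le> norm z \<longrightarrow> g z = f1 z + f2 z"
    using assms(1) unfolding quasi_split_normal_def by blast
  have smooth: "smooth2 f1" "smooth2 f2"
    using f1 f2 unfolding quasi_normal_def by auto
  obtain R1 K1 where tail1: "oscillatory_tail_bound (\<lambda>x y. partial_y f1 (x, y)) k R1 K1"
    using oscillatory_tail_bound_quasi_normal[OF f1 k] by blast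
  obtain R2 K2 where tail2: "oscillatory_tail_bound (\<lambda>x y. partial_y f2 (x, y)) k R2 K2"
    using oscillatory_tail_bound_quasi_normal[OF f2 k] by blast
  have "oscillatory_tail_bound (\<lambda>x y. partial_y g (x, y)) k (max R0 (max R1 R2)) (K1 + K2)"
    unfolding oscillatory_tail_bound_def
  proof (intro allI impI)
    fix x u v A :: real
    assume x: "max R0 (max R1 R2) \<le> \<bar>x\<bar>" and A: "0 < A" "u \<le> v" "\<forall>y\<in>{u..v}. A \<le> \<bar>y\<bar>"
    let ?I = "\<lambda>f. integral {u..v} (\<lambda>y. of_real (partial_y f (x, y)) * cis (- k * y))"
    have "g (x, t) = f1 (x, t) + f2 (x, t)" for t
      using eq x norm_fst_le[of x t] by auto
    then have "?I g = ?I f1 + ?I f2"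
      using smooth
      by (simp add: partial_y_eq_sum distrib_right integral_add integrable_continuous_interval
          continuous_intros smooth2_continuous_on_slice_y smooth2_D)
    then have "norm (?I g) \<le> K1 / (1 + x\<^sup>2 + A\<^sup>2) + K2 / (1 + x\<^sup>2 + A\<^sup>2)"
      using tail1 tail2 x A unfolding oscillatory_tail_bound_def
      by (simp add: norm_triangle_mono)
    then show "norm (?I g) \<le> (K1 + K2) / (1 + x\<^sup>2 + A\<^sup>2)"
      by (simp add: add_divide_distrib)
  qed
  then show thesis
    by (rule that)
qed

lemma oscillatory_decay_smooth2:
  assumes smooth: "smooth2 g" and basic: "basic_conditions g" and k: "k1 \<noteq> 0" "k2 \<noteq> 0"
    and tail: "oscillatory_tail_bound (\<lambda>x y. partial_y g (x, y)) k2 R K"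
  obtains C where "oscillatory_decay (\<lambda>x y. g (x, y)) (\<lambda>x y. partial_x g (x, y)) (\<lambda>x y. partial_y g (x, y))
    k1 k2 C R K"
proof -
  obtain C where "\<And>x y. \<bar>g (x, y)\<bar> \<le> C / (1 + \<bar>x\<bar>)" "\<And>x y. \<bar>g (x, y)\<bar> \<le> C / (1 + \<bar>y\<bar>)"
    "\<And>x y. \<bar>partial_x g (x, y)\<bar> \<le> C / (1 + x\<^sup>2 + y\<^sup>2)" "\<And>x y. \<bar>partial_y g (x, y)\<bar> \<le> C / (1 + x\<^sup>2 + y\<^sup>2)"
    using basic_conditions_decay[OF smooth basic] by metis
  then have "oscillatory_decay (\<lambda>x y. g (x, y)) (\<lambda>x y. partial_x g (x, y)) (\<lambda>x y. partial_y g (x, y))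
    k1 k2 C R K"
    using smooth k tail
    by unfold_locales (auto intro: smooth2_continuous smooth2_D has_real_derivative_partial_x
        has_real_derivative_partial_y)
  then show thesis
    by (rule that)
qed

lemma oscillatory_decay_quasi_normal_or_split:
  assumes "quasi_normal g \<or> quasi_split_normal g" and k: "k1 \<noteq> 0" "k2 \<noteq> 0"
  obtains C R K where "oscillatory_decay (\<lambda>x y. g (x, y)) (\<lambda>x y. partial_x g (x, y)) (\<lambda>x y. partial_y g (x, y))
    k1 k2 C R K"
proof -
  have "smooth2 g" "basic_conditions g"
    using assms(1) unfolding quasi_normal_def quasi_split_normal_def by auto
  moreover obtain R K where "oscillatory_tail_bound (\<lambda>x y. partial_y g (x, y)) k2 R K"
    using assms(1) oscillatory_tail_bound_quasi_normal oscillatory_tail_bound_quasi_split_normal k(2)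
    by metis
  ultimately show thesis
    using oscillatory_decay_smooth2 k that by metis
qed

theorem lemma13:
  fixes f :: "real \<times> real \<Rightarrow> real" and k1 k2 :: real
  assumes "smooth2 f"
    and "quasi_normal f \<or> quasi_split_normal f"
    and "k1 \<noteq> 0" and "k2 \<noteq> 0"
  shows "(\<forall>y. ((\<lambda>r. integral {-r..r} (\<lambda>x. complex_of_real (f (x, y)) * cis (- k1 * x)))
                   \<longlongrightarrow> fourier_x f k1 y) at_top)
       \<and> (\<forall>x. ((\<lambda>r. integral {-r..r} (\<lambda>y. complex_of_real (f (x, y)) * cis (- k2 * y)))
                   \<longlongrightarrow> fourier_y f x k2) at_top)
       \<and> (\<exists>L. has_improper_integral_R (\<lambda>y. fourier_x f k1 y * cis (- k2 * y)) L
             \<and> has_improper_integral_R (\<lambda>x. fourier_y f x k2 * cis (- k1 * x)) L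
             \<and> ((\<lambda>p. integral {- fst p..fst p}
                        (\<lambda>y. integral {- snd p..snd p}
                           (\<lambda>x. complex_of_real (f (x, y)) * cis (- k1 * x) * cis (- k2 * y))))
                 \<longlongrightarrow> L) (at_top \<times>\<^sub>F at_top))"
proof -
  (* The hypothesis smooth2 f is part of both quasi_normal f and quasi_split_normal f. *)
  obtain C R K where Y: "oscillatory_decay (\<lambda>x y. f (x, y)) (\<lambda>x y. partial_x f (x, y))
      (\<lambda>x y. partial_y f (x, y)) k1 k2 C R K"
    using oscillatory_decay_quasi_normal_or_split[OF assms(2-4)] .
  have "quasi_normal (f \<circ> prod.swap) \<or> quasi_split_normal (f \<circ> prod.swap)"
    using assms(2) quasi_normal_swap quasi_split_normal_swap by blast
  then obtain C' R' K' where "oscillatory_decay (\<lambda>x y. (f \<circ> prod.swap) (x, y))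
      (\<lambda>x y. partial_x (f \<circ> prod.swap) (x, y)) (\<lambda>x y. partial_y (f \<circ> prod.swap) (x, y)) k2 k1 C' R' K'"
    using oscillatory_decay_quasi_normal_or_split assms(3,4) by metis
  then have X: "oscillatory_decay (\<lambda>y x. f (x, y)) (\<lambda>y x. partial_y f (x, y)) (\<lambda>y x. partial_x f (x, y))
      k2 k1 C' R' K'"
    by (simp add: partial_x_swap partial_y_swap)
  interpret oscillatory_decay_xy "\<lambda>x y. f (x, y)" "\<lambda>x y. partial_x f (x, y)" "\<lambda>x y. partial_y f (x, y)"
    k1 k2 C R K C' R' K'
    using Y X by (simp add: oscillatory_decay_xy_def)
  have "fourier_x f k1 = Y.partial_fourier" "fourier_y f x k2 = X.partial_fourier x" for x
    by (simp_all add: fun_eq_iff fourier_x_def fourier_y_def Y.partial_fourier_def X.partial_fourier_def)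
  then show ?thesis
    using Y.partial_fourier_tendsto X.partial_fourier_tendsto iterated_fourier_limits by simp
qed

end
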